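(* Consider a GND instance, a reply $\varrho$-oracle ($\varrho\ge 1$), and a cost sharing mechanism $M$ whose induced GND game is $(\lambda,\mu)$-smooth with $\mu < 1/(\varrho \epsilon_1^2)$, where $\epsilon_1 = \frac{1+\epsilon}{1-\epsilon}$. If the approximate best response dynamic simulated in Alg-ABRD (with $M$ and the given $\epsilon$-cost shares) converges at some step $t \in [T]$, then the last strategy profile $p^t$ satisfies $$C(p^t) \leq \frac{\varrho \epsilon_1^2 \lambda}{1 - \varrho \epsilon_1^2 \mu} \cdot C^*.$$
   Context: GND instance: finite resource set $E$; requests $i \in [N]$, each with a reply collection $P_i \subseteq 2^E$ and a weight vector $w_i \in \mathbb{Z}_{\geq 1}^E$; constants $q \in \mathbb{Z}_{\ge 1}$, $\alpha_1,\dots,\alpha_q > 1$; for each $e$, $\sigma_e \geq 0$ and $\xi_{e,j} \geq 0$ (at least one $\xi_{e,j}>0$), and cost function $F_e(0)=0$, $F_e(l)=\sigma_e+\sum_j \xi_{e,j} l^{\alpha_j}$ for $l>0$. A strategy profile is $p=(p_1,\dots,p_N)\in P = P_1\times\dots\times P_N$; load $l_e^p=\sum_{i: e\in p_i} w_i(e)$; total cost $C(p)=\sum_e F_e(l_e^p)$; $C^*=\min_{p\in P} C(p)$. Notation $p_{-i}$ denotes $p$ without coordinate $i$ and $(p'_i,p_{-i})$ replaces the $i$-th coordinate by $p'_i$. A reply $\varrho$-oracle, given a reply collection $R$ and tolls $\tau:E\to\mathbb{R}_{>0}$, returns $r \in R$ with $\sum_{e\in r}\tau(e) \le \varrho \sum_{e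 \in r'}\tau(e)$ for all $r'\in R$. A cost sharing mechanism (CSM) $M=\{f_{i,e}\}$ assigns cost shares $f_{i,e}(p) \geq 0$ with $\sum_i f_{i,e}(p) = F_e(l_e^p)$; it is separable and uniform: $f_{i,e}(p)=0$ if $e \notin p_i$, and $f_{i,e}(p)$ depends only on $w_i(e)$ and the multiset of weights $w_{i'}(e)$ of the other players $i'$ with $e \in p_{i'}$. Player $i$'s individual cost is $C_i(p)=\sum_e f_{i,e}(p)$. The induced GND game (players $i$ with strategy spaces $P_i$ and costs $C_i$) is $(\lambda,\mu)$-smooth, for $\lambda>0$, $0<\mu<1$, if $\sum_i C_i(p'_i,p_{-i}) \le \lambda C(p') + \mu C(p)$ for all $p,p' \in P$. Alg-ABRD: fix small $\epsilon>0$ and $\epsilon_1=\frac{1+\epsilon}{1-\epsilon}$. Assume values $\widetilde f_{i,e}(p)$ are fixed for all $i,e,p$ with $(1-\epsilon) f_{i,e}(p) \le \widetilde f_{i,e}(p) \le (1+\epsilon) f_{i,e}(p)$, and set $\widetilde C_i(p)=\sum_e \widetilde f_{i,e}(p)$. Initial profile $p^0$: for each $i$, $p^0_i$ is the oracle's output on $P_i$ with tolls $\tau_i^0(e)=F_e(w_i(e))$. For $t=1,\dots,T$: for every $i$ compute $p'_i \in P_i$ with $\widetilde C_i(p'_i,p^{t-1}_{-i}) \le \varrho\, \widetilde C_i(p''_i,p^{t-1}_{-i})$ for all $p''_i\in P_i$ (obtained by calling the oracle with tolls $\tau(e)=\widetilde f_{i,e}$ of $i$ on $e$ when $i$ joins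 the current users of $e$), and let $\delta_i^t=\widetilde C_i(p^{t-1}) - \epsilon_1 \widetilde C_i(p'_i,p^{t-1}_{-i})$. If $\delta_i^t \le 0$ for all $i$, set $p^t=p^{t-1}$ and stop (the dynamic "converges at step $t$"). Otherwise let $\Delta^t=\sum_i \delta_i^t$, pick $j$ with $\delta_j^t>0$ and $\delta_j^t \ge \Delta^t/N$, and set $p^t=(p'_j,p^{t-1}_{-j})$. Finally output the generated profile $p^{t^*}$ of minimum total cost $C$. *)

theory Defs
  imports Complex_Main "HOL-Library.FuncSet" "HOL-Library.Multiset"
begin

definition profiles :: "nat \<Rightarrow> (nat \<Rightarrow> 'e set set) \<Rightarrow> (nat \<Rightarrow> 'e set) set" where
  "profiles N P = Pi\<^sub>E {..<N} P"

definition Fcost :: "nat \<Rightarrow> (nat \<Rightarrow> real) \<Rightarrow> ('e \<Rightarrow> real) \<Rightarrow> ('e \<Rightarrow> nat \<Rightarrow> real)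
    \<Rightarrow> 'e \<Rightarrow> real \<Rightarrow> real" where
  "Fcost q alpha sigma xi e l =
     (if l = 0 then 0 else sigma e + (\<Sum>j=1..q. xi e j * l powr alpha j))"

definition load :: "nat \<Rightarrow> (nat \<Rightarrow> 'e \<Rightarrow> nat) \<Rightarrow> (nat \<Rightarrow> 'e set) \<Rightarrow> 'e \<Rightarrow> nat" where
  "load N w p e = (\<Sum>i\<in>{i. i < N \<and> e \<in> p i}. w i e)"

definition total_cost :: "'e set \<Rightarrow> ('e \<Rightarrow> real \<Rightarrow> real) \<Rightarrow> nat \<Rightarrow> (nat \<Rightarrow> 'e \<Rightarrow> nat)
    \<Rightarrow> (nat \<Rightarrow> 'e set) \<Rightarrow> real" where
  "total_cost E F N w p = (\<Sum>e\<in>E. F e (real (load N w p e)))"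

definition opt_cost :: "'e set \<Rightarrow> ('e \<Rightarrow> real \<Rightarrow> real) \<Rightarrow> nat \<Rightarrow> (nat \<Rightarrow> 'e \<Rightarrow> nat)
    \<Rightarrow> (nat \<Rightarrow> 'e set set) \<Rightarrow> real" where
  "opt_cost E F N w P = Min (total_cost E F N w ` profiles N P)"

definition others_weights :: "nat \<Rightarrow> (nat \<Rightarrow> 'e \<Rightarrow> nat) \<Rightarrow> (nat \<Rightarrow> 'e set) \<Rightarrow> nat \<Rightarrow> 'e \<Rightarrow> nat multiset" where
  "others_weights N w p i e = image_mset (\<lambda>j. w j e) (mset_set {j. j < N \<and> j \<noteq> i \<and> e \<in> p j})"

text \<open>Separable, uniform cost sharing mechanism f i e p.\<close>
definition is_csm :: "'e set \<Rightarrow> ('e \<Rightarrow> real \<Rightarrow> real) \<Rightarrow> nat \<Rightarrow> (nat \<Rightarrow> 'e \<Rightarrow> nat)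
    \<Rightarrow> (nat \<Rightarrow> 'e set set) \<Rightarrow> (nat \<Rightarrow> 'e \<Rightarrow> (nat \<Rightarrow> 'e set) \<Rightarrow> real) \<Rightarrow> bool" where
  "is_csm E F N w P f \<longleftrightarrow>
     (\<forall>p\<in>profiles N P. \<forall>e\<in>E.
        (\<forall>i<N. f i e p \<ge> 0 \<and> (e \<notin> p i \<longrightarrow> f i e p = 0)) \<and>
        (\<Sum>i<N. f i e p) = F e (real (load N w p e))) \<and>
     (\<forall>p\<in>profiles N P. \<forall>p'\<in>profiles N P. \<forall>e\<in>E. \<forall>i<N. \<forall>j<N.
        e \<in> p i \<longrightarrow> e \<in> p' j \<longrightarrow> w i e = w j e \<longrightarrow>
        others_weights N w p i e = others_weights N w p' j e \<longrightarrow> f i e p = f j e p')"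

definition ind_cost :: "'e set \<Rightarrow> (nat \<Rightarrow> 'e \<Rightarrow> (nat \<Rightarrow> 'e set) \<Rightarrow> real) \<Rightarrow> nat
    \<Rightarrow> (nat \<Rightarrow> 'e set) \<Rightarrow> real" where
  "ind_cost E f i p = (\<Sum>e\<in>E. f i e p)"

definition smooth :: "'e set \<Rightarrow> ('e \<Rightarrow> real \<Rightarrow> real) \<Rightarrow> nat \<Rightarrow> (nat \<Rightarrow> 'e \<Rightarrow> nat)
    \<Rightarrow> (nat \<Rightarrow> 'e set set) \<Rightarrow> (nat \<Rightarrow> 'e \<Rightarrow> (nat \<Rightarrow> 'e set) \<Rightarrow> real) \<Rightarrow> real \<Rightarrow> real \<Rightarrow> bool" where
  "smooth E F N w P f lam mu \<longleftrightarrow> lam > 0 \<and> 0 < mu \<and> mu < 1 \<and>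
     (\<forall>p\<in>profiles N P. \<forall>p'\<in>profiles N P.
        (\<Sum>i<N. ind_cost E f i (p(i := p' i)))
          \<le> lam * total_cost E F N w p' + mu * total_cost E F N w p)"

end

theory Submission
  imports Defs
begin

text \<open>At the convergence step every player's true cost is within a factor
  \<open>\<rho> \<epsilon>\<^sub>1\<^sup>2\<close> of what it would pay by unilaterally switching to its strategy
  in an optimal profile: one factor \<open>\<epsilon>\<^sub>1\<close> from the stopping rule, \<open>\<rho>\<close> from
  the approximate best response, and \<open>(1 + \<epsilon>)/(1 - \<epsilon>) = \<epsilon>\<^sub>1\<close> from passing
  between approximate and exact cost shares. Summing over the players, the cost
  shares add up to the total cost, and \<open>(\<lambda>, \<mu>)\<close>-smoothness bounds the sum of
  deviation costs by \<open>\<lambda> C\<^sup>* + \<mu> C(p\<^sup>t)\<close>; solving for \<open>C(p\<^sup>t)\<close> gives the bound.\<close>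

lemma profiles_upd:
  assumes "p \<in> profiles N P" "i < N" "r \<in> P i"
  shows "p(i := r) \<in> profiles N P"
  using assms unfolding profiles_def by (auto simp: PiE_iff extensional_def)

lemma profiles_iterate_upd:
  assumes "ps 0 \<in> profiles N P"
    and "\<And>s. s < n \<Longrightarrow> \<exists>j<N. \<exists>r\<in>P j. ps (Suc s) = (ps s)(j := r)"
  shows "ps n \<in> profiles N P"
  using assms(2)
proof (induction n)
  case 0
  show ?case using assms(1) by simp
next
  case (Suc n)
  then obtain j r where "j < N" "r \<in> P j" "ps (Suc n) = (ps n)(j := r)"
    by blast
  with Suc show ?case by (metis less_SucI profiles_upd)
qed

lemma finite_profiles:
  assumes "\<And>i. i < N \<Longrightarrow> finite (P i)"
  shows "finite (profiles N P)"
  using assms unfolding profiles_def by (intro finite_PiE) auto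

lemma opt_cost_attained:
  assumes "finite E" "\<And>i. i < N \<Longrightarrow> P i \<subseteq> Pow E" "profiles N P \<noteq> {}"
  obtains p' where "p' \<in> profiles N P" "opt_cost E F N w P = total_cost E F N w p'"
proof -
  have "finite (profiles N P)"
    using assms(1,2) by (intro finite_profiles) (meson finite_Pow_iff finite_subset)
  then have "opt_cost E F N w P \<in> total_cost E F N w ` profiles N P"
    unfolding opt_cost_def using assms(3) by (intro Min_in) auto
  then show ?thesis using that by blast
qed

lemma sum_ind_cost_eq_total_cost:
  assumes "is_csm E F N w P f" "p \<in> profiles N P"
  shows "(\<Sum>i<N. ind_cost E f i p) = total_cost E F N w p"
proof -
  have "(\<Sum>i<N. ind_cost E f i p) = (\<Sum>e\<in>E. \<Sum>i<N. f i e p)"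
    unfolding ind_cost_def by (rule sum.swap)
  also have "\<dots> = total_cost E F N w p"
    unfolding total_cost_def using assms unfolding is_csm_def by (intro sum.cong) auto
  finally show ?thesis .
qed

lemma total_cost_le_by_smoothness:
  fixes c :: real
  assumes csm: "is_csm E F N w P f" and smooth: "smooth E F N w P f lam mu"
    and p: "p \<in> profiles N P" and p': "p' \<in> profiles N P"
    and c: "c > 0" "c * mu < 1"
    and deviation: "\<And>i. i < N \<Longrightarrow> ind_cost E f i p \<le> c * ind_cost E f i (p(i := p' i))"
  shows "total_cost E F N w p \<le> c * lam / (1 - c * mu) * total_cost E F N w p'"
proof -
  have "total_cost E F N w p \<le> c * (\<Sum>i<N. ind_cost E f i (p(i := p' i)))"
    unfolding sum_ind_cost_eq_total_cost[OF csm p, symmetric] sum_distrib_left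
    using deviation by (rule sum_mono) simp
  also have "\<dots> \<le> c * (lam * total_cost E F N w p' + mu * total_cost E F N w p)"
    using smooth p p' c(1) unfolding smooth_def by simp
  finally have "(1 - c * mu) * total_cost E F N w p \<le> c * lam * total_cost E F N w p'"
    by (simp add: algebra_simps)
  then show ?thesis
    using c(2) by (simp add: field_simps)
qed

lemma ind_cost_approx_bounds:
  assumes "\<And>e. e \<in> E \<Longrightarrow> (1 - eps) * f i e p \<le> ftil i e p \<and> ftil i e p \<le> (1 + eps) * f i e p"
  shows "(1 - eps) * ind_cost E f i p \<le> (\<Sum>e\<in>E. ftil i e p)"
    and "(\<Sum>e\<in>E. ftil i e p) \<le> (1 + eps) * ind_cost E f i p"
  unfolding ind_cost_def sum_distrib_left using assms by (auto intro: sum_mono)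

lemma ind_cost_le_at_approx_equilibrium:
  fixes rho eps eps1 :: real
  assumes approx: "\<And>e p. e \<in> E \<Longrightarrow> p \<in> profiles N P \<Longrightarrow>
      (1 - eps) * f i e p \<le> ftil i e p \<and> ftil i e p \<le> (1 + eps) * f i e p"
    and p: "p \<in> profiles N P" and i: "i < N" and r: "r \<in> P i"
    and stop: "(\<Sum>e\<in>E. ftil i e p) \<le> eps1 * (\<Sum>e\<in>E. ftil i e (p(i := b)))"
    and best_response: "(\<Sum>e\<in>E. ftil i e (p(i := b))) \<le> rho * (\<Sum>e\<in>E. ftil i e (p(i := r)))"
    and rho: "rho \<ge> 0" and eps: "0 < eps" "eps < 1" and eps1: "eps1 = (1 + eps) / (1 - eps)"
  shows "ind_cost E f i p \<le> rho * eps1 ^ 2 * ind_cost E f i (p(i := r))"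
proof -
  have e1: "eps1 \<ge> 0" using eps eps1 by simp
  have "(1 - eps) * ind_cost E f i p \<le> (\<Sum>e\<in>E. ftil i e p)"
    using approx p by (intro ind_cost_approx_bounds(1)) blast
  also have "\<dots> \<le> eps1 * (\<Sum>e\<in>E. ftil i e (p(i := b)))"
    by (rule stop)
  also have "\<dots> \<le> eps1 * (rho * (\<Sum>e\<in>E. ftil i e (p(i := r))))"
    using best_response e1 by (rule mult_left_mono)
  also have "\<dots> \<le> eps1 * (rho * ((1 + eps) * ind_cost E f i (p(i := r))))"
    using approx profiles_upd[OF p i r] e1 rho
    by (intro mult_left_mono ind_cost_approx_bounds(2)) blast+
  finally have "ind_cost E f i p \<le> eps1 * rho * ((1 + eps) / (1 - eps)) * ind_cost E f i (p(i := r))"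
    using eps by (simp add: pos_le_divide_eq mult.commute mult.left_commute)
  then show ?thesis
    by (simp add: eps1[symmetric] power2_eq_square mult_ac)
qed

theorem lemma5p1:
  fixes E :: "'e set" and N q T t :: nat and P :: "nat \<Rightarrow> 'e set set"
    and w :: "nat \<Rightarrow> 'e \<Rightarrow> nat" and alpha :: "nat \<Rightarrow> real"
    and sigma :: "'e \<Rightarrow> real" and xi :: "'e \<Rightarrow> nat \<Rightarrow> real"
    and f ftil :: "nat \<Rightarrow> 'e \<Rightarrow> (nat \<Rightarrow> 'e set) \<Rightarrow> real"
    and rho lam mu eps eps1 :: real
    and ps :: "nat \<Rightarrow> nat \<Rightarrow> 'e set" and br :: "nat \<Rightarrow> nat \<Rightarrow> 'e set"
    and Ctil :: "nat \<Rightarrow> (nat \<Rightarrow> 'e set) \<Rightarrow> real" and delta :: "nat \<Rightarrow> nat \<Rightarrow> real"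
  defines "F \<equiv> Fcost q alpha sigma xi"
  assumes finE: "finite E"
    and P: "\<And>i. i < N \<Longrightarrow> P i \<subseteq> Pow E \<and> P i \<noteq> {}"
    and w: "\<And>i e. i < N \<Longrightarrow> e \<in> E \<Longrightarrow> w i e \<ge> 1"
    and q: "q \<ge> 1"
    and alpha: "\<And>j. j \<in> {1..q} \<Longrightarrow> alpha j > 1"
    and sigma: "\<And>e. e \<in> E \<Longrightarrow> sigma e \<ge> 0"
    and xi: "\<And>e j. e \<in> E \<Longrightarrow> j \<in> {1..q} \<Longrightarrow> xi e j \<ge> 0"
    and xi_pos: "\<And>e. e \<in> E \<Longrightarrow> \<exists>j\<in>{1..q}. xi e j > 0"
    and rho: "rho \<ge> 1"
    and eps: "0 < eps" "eps < 1"
    and eps1: "eps1 = (1 + eps) / (1 - eps)"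
    and csm: "is_csm E F N w P f"
    and smooth: "smooth E F N w P f lam mu"
    and mu_small: "mu < 1 / (rho * eps1 ^ 2)"
    and ftil: "\<And>i e p. i < N \<Longrightarrow> e \<in> E \<Longrightarrow> p \<in> profiles N P \<Longrightarrow>
                 (1 - eps) * f i e p \<le> ftil i e p \<and> ftil i e p \<le> (1 + eps) * f i e p"
    and Ctil_def: "\<And>i p. Ctil i p = (\<Sum>e\<in>E. ftil i e p)"
    \<comment> \<open>initial profile: oracle output with tolls F_e(w_i(e))\<close>
    and init: "ps 0 \<in> profiles N P"
    and init_oracle: "\<And>i r. i < N \<Longrightarrow> r \<in> P i \<Longrightarrow>
        (\<Sum>e\<in>ps 0 i. F e (real (w i e))) \<le> rho * (\<Sum>e\<in>r. F e (real (w i e)))"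
    \<comment> \<open>approximate best responses computed in steps 1..t\<close>
    and br: "\<And>s i. s \<in> {1..t} \<Longrightarrow> i < N \<Longrightarrow> br s i \<in> P i \<and>
        (\<forall>r\<in>P i. Ctil i ((ps (s - 1))(i := br s i)) \<le> rho * Ctil i ((ps (s - 1))(i := r)))"
    and delta_def: "\<And>s i. delta s i = Ctil i (ps (s - 1)) - eps1 * Ctil i ((ps (s - 1))(i := br s i))"
    \<comment> \<open>steps before t: no convergence, one player with large improvement moves\<close>
    and steps: "\<And>s. s \<in> {1..<t} \<Longrightarrow> (\<exists>i<N. delta s i > 0) \<and>
        (\<exists>j<N. delta s j > 0 \<and> delta s j \<ge> (\<Sum>i<N. delta s i) / real N \<and>
               ps s = (ps (s - 1))(j := br s j))"
    \<comment> \<open>convergence at step t\<close>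
    and t: "t \<in> {1..T}"
    and conv: "\<And>i. i < N \<Longrightarrow> delta t i \<le> 0"
    and conv_ps: "ps t = ps (t - 1)"
  shows "total_cost E F N w (ps t)
           \<le> rho * eps1 ^ 2 * lam / (1 - rho * eps1 ^ 2 * mu) * opt_cost E F N w P"
proof -
  define p where "p = ps (t - 1)"
  have p: "p \<in> profiles N P"
    unfolding p_def
  proof (rule profiles_iterate_upd[where ps = ps, OF init])
    fix s assume "s < t - 1"
    then have s: "Suc s \<in> {1..<t}" by simp
    then obtain j where j: "j < N" "ps (Suc s) = (ps s)(j := br (Suc s) j)"
      using steps by fastforce
    moreover have "br (Suc s) j \<in> P j"
      using br[of "Suc s" j] s j by simp
    ultimately show "\<exists>j<N. \<exists>r\<in>P j. ps (Suc s) = (ps s)(j := r)"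
      by blast
  qed
  obtain p' where p': "p' \<in> profiles N P" "opt_cost E F N w P = total_cost E F N w p'"
    using opt_cost_attained[OF finE] P p by blast
  have "ind_cost E f i p \<le> rho * eps1 ^ 2 * ind_cost E f i (p(i := p' i))"
    if i: "i < N" for i
  proof (rule ind_cost_le_at_approx_equilibrium[where f = f and ftil = ftil, OF ftil[OF i] p i])
    show "p' i \<in> P i"
      using p' i by (auto simp: profiles_def)
    show "(\<Sum>e\<in>E. ftil i e p) \<le> eps1 * (\<Sum>e\<in>E. ftil i e (p(i := br t i)))"
      using conv[OF i] by (simp add: delta_def Ctil_def p_def)
    show "(\<Sum>e\<in>E. ftil i e (p(i := br t i))) \<le> rho * (\<Sum>e\<in>E. ftil i e (p(i := p' i)))"
      using br[of t i] t i \<open>p' i \<in> P i\<close> by (simp add: Ctil_def p_def)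
  qed (use rho eps eps1 in auto)
  moreover have c: "rho * eps1 ^ 2 > 0"
    using rho eps eps1 by simp
  moreover have "rho * eps1 ^ 2 * mu < 1"
    using mu_small c by (simp add: field_simps)
  ultimately show ?thesis
    using total_cost_le_by_smoothness[OF csm smooth p p'(1)] p'(2) conv_ps p_def by simp
qed

end
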